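(* Let $G$ be a connected bipartite graph with vertex set $\{u_1,\dots,u_n\}$, $n\ge2$, and let $\mathcal{H}=\{H_1,\dots,H_n\}$ be a family of graphs such that $H_i\notin\mathcal{G}$ for some $i$. Then $\dim_l(G\circ\mathcal{H})=\sum_{i=1}^n\operatorname{adim}_l(H_i)$.
   Context: All graphs are finite and simple with at least one vertex. $d_G$ is shortest-path distance ($+\infty$ between components), $d_{G,2}=\min\{d_G,2\}$; $s$ distinguishes $x,y$ w.r.t. $d$ if $d(s,x)\ne d(s,y)$. $\dim_l(G)$: minimum size of $S\subseteq V(G)$ such that any two adjacent vertices are distinguished w.r.t. $d_G$ by some vertex of $S$. $\operatorname{adim}_l(H)$: minimum size of $S\subseteq V(H)$ such that any two adjacent vertices are distinguished w.r.t. $d_{H,2}$ by some vertex of $S$; minimum such sets are local adjacency bases. $\mathcal{G}$: class of graphs $H$ such that every local adjacency basis $B$ of $H$ satisfies $B\subseteq N_H(v)$ for some $v\in V(H)$. Lexicographic product $G\circ\mathcal{H}$: vertex set $\bigcup_i\{u_i\}\times V(H_i)$, $(u_i,v)\sim(u_j,w)$ iff $u_iu_j\in E(G)$, or $i=j$ and $vw\in E(H_i)$. *)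

theory Defs
  imports Main "HOL-Library.Extended_Nat"
begin

text \<open>A graph is a pair (V, E) of a vertex set and a set of ordered pairs (edges, both orientations).\<close>
type_synonym 'a graph = "'a set \<times> ('a \<times> 'a) set"

definition verts :: "'a graph \<Rightarrow> 'a set" where "verts G = fst G"
definition edges :: "'a graph \<Rightarrow> ('a \<times> 'a) set" where "edges G = snd G"

definition adj :: "'a graph \<Rightarrow> 'a \<Rightarrow> 'a \<Rightarrow> bool" where
  "adj G x y \<longleftrightarrow> (x, y) \<in> edges G"

definition simple_graph :: "'a graph \<Rightarrow> bool" where
  "simple_graph G \<longleftrightarrow> finite (verts G) \<and> verts G \<noteq> {} \<and>
     edges G \<subseteq> verts G \<times> verts G \<and>
     (\<forall>x y. (x, y) \<in> edges G \<longrightarrow> (y, x) \<in> edges G) \<and>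
     (\<forall>x. (x, x) \<notin> edges G)"

definition walk :: "'a graph \<Rightarrow> 'a list \<Rightarrow> bool" where
  "walk G xs \<longleftrightarrow> xs \<noteq> [] \<and> set xs \<subseteq> verts G \<and>
     (\<forall>i. Suc i < length xs \<longrightarrow> adj G (xs ! i) (xs ! Suc i))"

definition dist :: "'a graph \<Rightarrow> 'a \<Rightarrow> 'a \<Rightarrow> enat" where
  "dist G x y = (if \<exists>xs. walk G xs \<and> hd xs = x \<and> last xs = y
     then enat (LEAST n. \<exists>xs. walk G xs \<and> hd xs = x \<and> last xs = y \<and> length xs = Suc n)
     else \<infinity>)"

definition dist2 :: "'a graph \<Rightarrow> 'a \<Rightarrow> 'a \<Rightarrow> enat" where
  "dist2 G x y = min (dist G x y) 2"

definition connected :: "'a graph \<Rightarrow> bool" where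
  "connected G \<longleftrightarrow> (\<forall>x\<in>verts G. \<forall>y\<in>verts G. dist G x y \<noteq> \<infinity>)"

definition bipartite :: "'a graph \<Rightarrow> bool" where
  "bipartite G \<longleftrightarrow> (\<exists>A. \<forall>x y. (x, y) \<in> edges G \<longrightarrow> (x \<in> A \<longleftrightarrow> y \<notin> A))"

definition neighbors :: "'a graph \<Rightarrow> 'a \<Rightarrow> 'a set" where
  "neighbors G v = {w. adj G v w}"

definition local_resolving :: "'a graph \<Rightarrow> ('a \<Rightarrow> 'a \<Rightarrow> enat) \<Rightarrow> 'a set \<Rightarrow> bool" where
  "local_resolving G d S \<longleftrightarrow> S \<subseteq> verts G \<and>
     (\<forall>x y. adj G x y \<longrightarrow> (\<exists>s\<in>S. d s x \<noteq> d s y))"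

definition local_metric_dim :: "'a graph \<Rightarrow> nat" where
  "local_metric_dim G = Min {card S | S. local_resolving G (dist G) S}"

definition local_adj_dim :: "'a graph \<Rightarrow> nat" where
  "local_adj_dim H = Min {card S | S. local_resolving H (dist2 H) S}"

definition local_adj_basis :: "'a graph \<Rightarrow> 'a set \<Rightarrow> bool" where
  "local_adj_basis H B \<longleftrightarrow> local_resolving H (dist2 H) B \<and> card B = local_adj_dim H"

definition classG :: "'a graph \<Rightarrow> bool" where
  "classG H \<longleftrightarrow> (\<forall>B. local_adj_basis H B \<longrightarrow> (\<exists>v\<in>verts H. B \<subseteq> neighbors H v))"

definition lex_prod :: "'a graph \<Rightarrow> ('a \<Rightarrow> 'b graph) \<Rightarrow> ('a \<times> 'b) graph" where
  "lex_prod G H =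
    ((SIGMA u:verts G. verts (H u)),
     {((u, v), (u', w)) | u v u' w.
        u \<in> verts G \<and> v \<in> verts (H u) \<and> u' \<in> verts G \<and> w \<in> verts (H u') \<and>
        (adj G u u' \<or> (u = u' \<and> adj (H u) v w))})"

end

theory Submission
  imports Defs
begin

text \<open>
  In the product, two vertices of the same copy of \<open>H u\<close> are at distance \<open>dist2 (H u)\<close>
  (a common neighbour lies in an adjacent copy), while vertices of distinct copies over \<open>x\<close> and
  \<open>u\<close> are at distance \<open>dist G x u\<close>. Hence only vertices of the copy of \<open>H u\<close> distinguish
  adjacent vertices inside it, so the traces of a local resolving set on the copies are local
  adjacency resolving sets of the \<open>H u\<close>: this gives the lower bound. Conversely, the union of
  local adjacency bases of all copies resolves the edges inside copies; an edge between copies over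
  adjacent \<open>u, u'\<close> is resolved by the basis of a copy \<open>H i\<close> outside the class \<open>\<G>\<close>. If
  \<open>i \<notin> {u, u'}\<close>, any of its vertices works, because bipartiteness gives
  \<open>dist G i u \<noteq> dist G i u'\<close>; if \<open>i = u\<close>, a basis vertex not adjacent to the endpoint in the copy
  of \<open>H u\<close> exists since the basis is not contained in that endpoint's neighbourhood, and it is at
  distance \<open>\<noteq> 1\<close> from that endpoint but at distance \<open>1\<close> from the other.
\<close>

subsection \<open>Walks and distances\<close>

lemma walk_Nil [simp]: "\<not> walk \<Gamma> []"
  unfolding walk_def by simp

lemma walk_single [simp]: "walk \<Gamma> [a] \<longleftrightarrow> a \<in> verts \<Gamma>"
  unfolding walk_def by simp

lemma walk_Cons2: "walk \<Gamma> (a # b # xs) \<longleftrightarrow> a \<in> verts \<Gamma> \<and> adj \<Gamma> a b \<and> walk \<Gamma> (b # xs)"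
  unfolding walk_def by (auto simp: nth_Cons split: nat.splits)

lemma dist_le_walk: "walk \<Gamma> xs \<Longrightarrow> dist \<Gamma> (hd xs) (last xs) \<le> enat (length xs - 1)"
proof -
  assume w: "walk \<Gamma> xs"
  then have ex: "\<exists>ys. walk \<Gamma> ys \<and> hd ys = hd xs \<and> last ys = last xs" by blast
  have "(LEAST n. \<exists>ys. walk \<Gamma> ys \<and> hd ys = hd xs \<and> last ys = last xs \<and> length ys = Suc n)
      \<le> length xs - 1"
    by (rule Least_le) (use w in \<open>auto simp: walk_def\<close>)
  then show ?thesis unfolding dist_def using ex by simp
qed

lemma dist_enatE:
  assumes "dist \<Gamma> a b = enat n"
  obtains xs where "walk \<Gamma> xs" "hd xs = a" "last xs = b" "length xs = Suc n"
proof -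
  have ex: "\<exists>xs. walk \<Gamma> xs \<and> hd xs = a \<and> last xs = b"
    using assms unfolding dist_def by (auto split: if_splits)
  then obtain xs where xs: "walk \<Gamma> xs" "hd xs = a" "last xs = b" by blast
  then have "length xs = Suc (length xs - 1)" by (cases xs) auto
  with xs have ex2: "\<exists>m ys. walk \<Gamma> ys \<and> hd ys = a \<and> last ys = b \<and> length ys = Suc m" by blast
  have "n = (LEAST m. \<exists>ys. walk \<Gamma> ys \<and> hd ys = a \<and> last ys = b \<and> length ys = Suc m)"
    using assms ex unfolding dist_def by simp
  then show ?thesis using LeastI_ex[OF ex2] that by auto
qed

lemma dist_geI:
  assumes "\<And>xs. walk \<Gamma> xs \<Longrightarrow> hd xs = a \<Longrightarrow> last xs = b \<Longrightarrow> Suc m \<le> length xs"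
  shows "enat m \<le> dist \<Gamma> a b"
proof (cases "dist \<Gamma> a b")
  case (enat n)
  then obtain xs where "walk \<Gamma> xs" "hd xs = a" "last xs = b" "length xs = Suc n"
    by (rule dist_enatE)
  then show ?thesis using assms enat by fastforce
qed simp

lemma dist_refl: "a \<in> verts \<Gamma> \<Longrightarrow> dist \<Gamma> a a = 0"
  using dist_le_walk[of \<Gamma> "[a]"] by (simp add: zero_enat_def[symmetric])

lemma dist_adj:
  assumes "a \<noteq> b" "adj \<Gamma> a b" "a \<in> verts \<Gamma>" "b \<in> verts \<Gamma>"
  shows "dist \<Gamma> a b = 1"
proof -
  have "dist \<Gamma> a b \<le> enat 1" using dist_le_walk[of \<Gamma> "[a,b]"] assms by (simp add: walk_Cons2)
  moreover have "enat 1 \<le> dist \<Gamma> a b"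
  proof (rule dist_geI)
    fix xs assume "walk \<Gamma> xs" "hd xs = a" "last xs = b"
    then show "Suc 1 \<le> length xs" using assms
      by (cases xs; cases "tl xs") (auto simp: walk_def)
  qed
  ultimately show ?thesis by (simp add: one_enat_def)
qed

lemma dist_nonadj:
  assumes "a \<noteq> b" "\<not> adj \<Gamma> a b"
  shows "2 \<le> dist \<Gamma> a b"
proof -
  have "enat 2 \<le> dist \<Gamma> a b"
  proof (rule dist_geI)
    fix xs assume "walk \<Gamma> xs" "hd xs = a" "last xs = b"
    then show "Suc 2 \<le> length xs" using assms
      by (cases xs; cases "tl xs"; cases "tl (tl xs)") (auto simp: walk_Cons2)
  qed
  then show ?thesis by (simp add: numeral_eq_enat)
qed

lemma dist2_simple_graph:
  assumes "simple_graph \<Gamma>" "a \<in> verts \<Gamma>" "b \<in> verts \<Gamma>"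
  shows "dist2 \<Gamma> a b = (if a = b then 0 else if adj \<Gamma> a b then 1 else 2)"
  using dist_refl[of a \<Gamma>] dist_adj[of a b \<Gamma>] dist_nonadj[of a b \<Gamma>] assms
  by (auto simp: dist2_def min_def)

lemma walk_parity:
  assumes A: "\<forall>x y. (x, y) \<in> edges \<Gamma> \<longrightarrow> (x \<in> A \<longleftrightarrow> y \<notin> A)"
  shows "walk \<Gamma> xs \<Longrightarrow> (hd xs \<in> A \<longleftrightarrow> last xs \<in> A) \<longleftrightarrow> odd (length xs)"
proof (induction xs)
  case (Cons a xs)
  show ?case
  proof (cases xs)
    case (Cons b ys)
    with Cons.prems have "adj \<Gamma> a b" "walk \<Gamma> xs" by (auto simp: walk_Cons2)
    then show ?thesis using Cons.IH A \<open>xs = b # ys\<close> by (auto simp: adj_def)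
  qed simp
qed simp

lemma bipartite_dist_adj_neq:
  assumes "bipartite \<Gamma>" "adj \<Gamma> u u'" "dist \<Gamma> x u \<noteq> \<infinity>"
  shows "dist \<Gamma> x u \<noteq> dist \<Gamma> x u'"
proof
  assume eq: "dist \<Gamma> x u = dist \<Gamma> x u'"
  obtain A where A: "\<forall>x y. (x, y) \<in> edges \<Gamma> \<longrightarrow> (x \<in> A \<longleftrightarrow> y \<notin> A)"
    using assms(1) unfolding bipartite_def by blast
  obtain n where n: "dist \<Gamma> x u = enat n" using assms(3) by blast
  obtain xs where xs: "walk \<Gamma> xs" "hd xs = x" "last xs = u" "length xs = Suc n"
    using n by (rule dist_enatE)
  obtain ys where ys: "walk \<Gamma> ys" "hd ys = x" "last ys = u'" "length ys = Suc n"
    using n[unfolded eq] by (rule dist_enatE)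
  have "u \<in> A \<longleftrightarrow> u' \<notin> A" using A assms(2) by (simp add: adj_def)
  then show False using walk_parity[OF A xs(1)] walk_parity[OF A ys(1)] xs ys by auto
qed

lemma connected_obtains_neighbor:
  assumes "connected \<Gamma>" "card (verts \<Gamma>) \<ge> 2" "u \<in> verts \<Gamma>"
  obtains u' where "adj \<Gamma> u u'"
proof -
  have "\<not> verts \<Gamma> \<subseteq> {u}"
    using card_mono[of "{u}" "verts \<Gamma>"] assms(2) by auto
  then obtain w where w: "w \<in> verts \<Gamma>" "w \<noteq> u" by blast
  obtain n where "dist \<Gamma> u w = enat n" using assms(1,3) w unfolding connected_def by force
  then obtain xs where xs: "walk \<Gamma> xs" "hd xs = u" "last xs = w" "length xs = Suc n"
    by (rule dist_enatE)
  then have "n \<noteq> 0" using w by (cases xs) auto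
  then have "adj \<Gamma> (xs ! 0) (xs ! 1)" using xs unfolding walk_def by auto
  moreover have "xs ! 0 = u" using xs by (cases xs) auto
  ultimately show ?thesis using that by blast
qed

lemma finite_card_local_resolving:
  "finite (verts \<Gamma>) \<Longrightarrow> finite {card S | S. local_resolving \<Gamma> d S}"
  by (rule finite_subset[of _ "{..card (verts \<Gamma>)}"])
     (auto simp: local_resolving_def intro: card_mono)

lemma local_resolving_verts: "simple_graph \<Gamma> \<Longrightarrow> local_resolving \<Gamma> (dist2 \<Gamma>) (verts \<Gamma>)"
  unfolding local_resolving_def
proof (intro conjI allI impI)
  fix x y assume s: "simple_graph \<Gamma>" and a: "adj \<Gamma> x y"
  then have xy: "x \<in> verts \<Gamma>" "y \<in> verts \<Gamma>" "x \<noteq> y"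
    by (auto simp: simple_graph_def adj_def)
  then have "dist2 \<Gamma> x x \<noteq> dist2 \<Gamma> x y"
    using dist_refl[of x \<Gamma>] dist_adj[of x y \<Gamma>] a by (simp add: dist2_def)
  then show "\<exists>s\<in>verts \<Gamma>. dist2 \<Gamma> s x \<noteq> dist2 \<Gamma> s y" using xy by blast
qed simp

lemma local_adj_basis_exists: "simple_graph \<Gamma> \<Longrightarrow> \<exists>B. local_adj_basis \<Gamma> B"
proof -
  assume s: "simple_graph \<Gamma>"
  let ?M = "{card S | S. local_resolving \<Gamma> (dist2 \<Gamma>) S}"
  have "finite ?M" using s by (simp add: simple_graph_def finite_card_local_resolving)
  moreover have "?M \<noteq> {}" using local_resolving_verts[OF s] by blast
  ultimately have "Min ?M \<in> ?M" by (rule Min_in)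
  then show ?thesis unfolding local_adj_basis_def local_adj_dim_def by auto
qed

lemma local_adj_dim_le_card:
  "simple_graph \<Gamma> \<Longrightarrow> local_resolving \<Gamma> (dist2 \<Gamma>) S \<Longrightarrow> local_adj_dim \<Gamma> \<le> card S"
  unfolding local_adj_dim_def
  by (auto simp: simple_graph_def intro: Min_le finite_card_local_resolving)

lemma not_classG_obtains_basis:
  assumes "\<not> classG \<Gamma>"
  obtains B where "local_adj_basis \<Gamma> B" "\<forall>v\<in>verts \<Gamma>. \<exists>s\<in>B. \<not> adj \<Gamma> v s"
  using assms unfolding classG_def neighbors_def by blast

subsection \<open>Walks in the lexicographic product\<close>

lemma verts_lex_prod: "verts (lex_prod G H) = (SIGMA u:verts G. verts (H u))"
  by (simp add: verts_def lex_prod_def)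

lemma adj_lex_prod: "adj (lex_prod G H) (a, b) (c, d) \<longleftrightarrow>
   a \<in> verts G \<and> b \<in> verts (H a) \<and> c \<in> verts G \<and> d \<in> verts (H c) \<and>
   (adj G a c \<or> (a = c \<and> adj (H a) b d))"
  by (simp add: adj_def edges_def lex_prod_def)

lemma walk_lex_prod_project:
  "walk (lex_prod G H) zs \<Longrightarrow>
   \<exists>ys. walk G ys \<and> hd ys = fst (hd zs) \<and> last ys = fst (last zs) \<and> length ys \<le> length zs"
proof (induction zs)
  case (Cons a zs)
  show ?case
  proof (cases zs)
    case Nil
    then show ?thesis using Cons.prems
      by (intro exI[of _ "[fst a]"]) (auto simp: verts_lex_prod)
  next
    case (Cons b rest)
    with Cons.prems have ab: "adj (lex_prod G H) a b" and w: "walk (lex_prod G H) zs"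
      by (auto simp: walk_Cons2)
    from Cons.IH[OF w] obtain ys where ys: "walk G ys" "hd ys = fst (hd zs)"
      "last ys = fst (last zs)" "length ys \<le> length zs" by blast
    have yne: "ys \<noteq> []" using ys by auto
    from ab have a: "fst a \<in> verts G" "fst a = fst b \<or> adj G (fst a) (fst b)"
      by (cases a, cases b, auto simp: adj_lex_prod)+
    show ?thesis
      using a(2)
    proof
      assume "fst a = fst b"
      then show ?thesis using ys \<open>zs = b # rest\<close> by (intro exI[of _ ys]) auto
    next
      assume "adj G (fst a) (fst b)"
      then have "walk G (fst a # ys)"
        using ys a(1) \<open>zs = b # rest\<close> by (cases ys) (auto simp: walk_Cons2)
      then show ?thesis using ys yne \<open>zs = b # rest\<close>
        by (intro exI[of _ "fst a # ys"]) auto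
    qed
  qed
qed simp

lemma dist_lex_prod_ge: "dist G (fst a) (fst b) \<le> dist (lex_prod G H) a b"
proof (cases "dist (lex_prod G H) a b")
  case (enat n)
  then obtain zs where zs: "walk (lex_prod G H) zs" "hd zs = a" "last zs = b" "length zs = Suc n"
    by (rule dist_enatE)
  from walk_lex_prod_project[OF zs(1)] obtain ys where ys: "walk G ys" "hd ys = fst (hd zs)"
    "last ys = fst (last zs)" "length ys \<le> length zs" by blast
  have "dist G (fst a) (fst b) \<le> enat (length ys - 1)" using dist_le_walk[OF ys(1)] ys zs by simp
  also have "\<dots> \<le> enat n" using ys zs by simp
  finally show ?thesis using enat by simp
qed simp

lemma walk_lex_prod_lift:
  assumes ne: "\<forall>u\<in>verts G. verts (H u) \<noteq> {}"
    and gs: "walk G gs" "length gs = Suc m" and m: "m \<ge> 1"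
    and y: "y \<in> verts (H (hd gs))" and v: "v \<in> verts (H (last gs))"
  shows "dist (lex_prod G H) (hd gs, y) (last gs, v) \<le> enat m"
proof -
  define f where "f j = (if j = 0 then y else if j = m then v else SOME z. z \<in> verts (H (gs ! j)))"
    for j
  define zs where "zs = map (\<lambda>j. (gs ! j, f j)) [0..<Suc m]"
  have gne: "gs \<noteq> []" using gs by auto
  have hd0: "gs ! 0 = hd gs" using gne by (simp add: hd_conv_nth)
  have lastm: "gs ! m = last gs" using gne gs by (simp add: last_conv_nth)
  have mem: "gs ! j \<in> verts G \<and> f j \<in> verts (H (gs ! j))" if "j \<le> m" for j
  proof -
    have g: "gs ! j \<in> verts G" using gs that unfolding walk_def by auto
    moreover have "\<exists>z. z \<in> verts (H (gs ! j))" using ne g by auto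
    ultimately show ?thesis using y v hd0 lastm by (auto simp: f_def intro: someI_ex)
  qed
  have w: "walk (lex_prod G H) zs"
    unfolding walk_def
  proof (intro conjI allI impI)
    show "zs \<noteq> []" "set zs \<subseteq> verts (lex_prod G H)"
      using mem by (auto simp: zs_def verts_lex_prod)
  next
    fix i assume "Suc i < length zs"
    then have im: "Suc i \<le> m" by (simp add: zs_def)
    then have "adj G (gs ! i) (gs ! Suc i)" using gs unfolding walk_def by auto
    then show "adj (lex_prod G H) (zs ! i) (zs ! Suc i)"
      using mem[of i] mem[of "Suc i"] im by (simp add: zs_def adj_lex_prod del: upt_Suc)
  qed
  have "hd zs = (hd gs, y)" using hd0 by (simp add: zs_def f_def hd_map del: upt_Suc)
  moreover have "last zs = (last gs, v)" using lastm m by (simp add: zs_def f_def last_map del: upt_Suc)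
  moreover have "length zs = Suc m" by (simp add: zs_def)
  ultimately show ?thesis using dist_le_walk[OF w] by simp
qed

locale connected_lex_prod =
  fixes G :: "'a graph" and H :: "'a \<Rightarrow> 'b graph"
  assumes simple: "simple_graph G"
    and connected: "connected G"
    and two_verts: "card (verts G) \<ge> 2"
    and simple_fibres: "\<forall>u\<in>verts G. simple_graph (H u)"
begin

lemma adj_G: "adj G x y \<Longrightarrow> x \<in> verts G \<and> y \<in> verts G \<and> x \<noteq> y \<and> adj G y x"
  using simple by (auto simp: simple_graph_def adj_def)

lemma adj_fibre:
  "u \<in> verts G \<Longrightarrow> adj (H u) x y \<Longrightarrow> x \<in> verts (H u) \<and> y \<in> verts (H u) \<and> adj (H u) y x"
  using simple_fibres by (auto simp: simple_graph_def adj_def)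

lemma fibre_nonempty: "\<forall>u\<in>verts G. verts (H u) \<noteq> {}"
  using simple_fibres by (simp add: simple_graph_def)

lemma finite_verts_lex_prod: "finite (verts (lex_prod G H))"
  using simple simple_fibres by (simp add: simple_graph_def verts_lex_prod)

lemma dist_lex_prod_same_fibre:
  assumes u: "u \<in> verts G" and s: "s \<in> verts (H u)" and x: "x \<in> verts (H u)"
  shows "dist (lex_prod G H) (u, s) (u, x) = dist2 (H u) s x"
proof -
  let ?P = "lex_prod G H"
  have vP: "(u, s) \<in> verts ?P" "(u, x) \<in> verts ?P" using u s x by (auto simp: verts_lex_prod)
  have aP: "adj ?P (u, s) (u, x) \<longleftrightarrow> adj (H u) s x" using u s x adj_G by (auto simp: adj_lex_prod)
  have "dist ?P (u, s) (u, x) = 2" if "s \<noteq> x" "\<not> adj (H u) s x"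
  proof -
    obtain u' where u': "adj G u u'" using connected two_verts u by (rule connected_obtains_neighbor)
    then obtain z where z: "z \<in> verts (H u')" using adj_G fibre_nonempty by blast
    have "walk ?P [(u, s), (u', z), (u, x)]"
      using u s x u' z adj_G by (simp add: walk_Cons2 verts_lex_prod adj_lex_prod)
    from dist_le_walk[OF this] have "dist ?P (u, s) (u, x) \<le> 2"
      by (simp add: numeral_eq_enat numeral_2_eq_2)
    with dist_nonadj[of "(u, s)" "(u, x)" ?P] aP that show ?thesis by simp
  qed
  moreover have "dist ?P (u, s) (u, x) = 1" if "s \<noteq> x" "adj (H u) s x"
    using dist_adj[OF _ _ vP] aP that by simp
  ultimately show ?thesis
    using dist_refl[OF vP(1)] dist2_simple_graph[of "H u" s x] simple_fibres u s x
    by (cases "s = x") auto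
qed

lemma dist_lex_prod_other_fibre:
  assumes x: "x \<in> verts G" and u: "u \<in> verts G" and "x \<noteq> u"
    and y: "y \<in> verts (H x)" and v: "v \<in> verts (H u)"
  shows "dist (lex_prod G H) (x, y) (u, v) = dist G x u"
proof -
  obtain n where n: "dist G x u = enat n" using connected x u unfolding connected_def by force
  then obtain gs where gs: "walk G gs" "hd gs = x" "last gs = u" "length gs = Suc n"
    by (rule dist_enatE)
  have "n \<ge> 1" using gs \<open>x \<noteq> u\<close> by (cases gs) (auto split: if_splits simp: Suc_le_eq)
  from walk_lex_prod_lift[OF fibre_nonempty gs(1,4) this, of y v] gs y v
  have "dist (lex_prod G H) (x, y) (u, v) \<le> enat n" by simp
  with dist_lex_prod_ge[of G "(x, y)" "(u, v)" H] n show ?thesis by simp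
qed

lemma local_resolving_fibre:
  assumes S: "local_resolving (lex_prod G H) (dist (lex_prod G H)) S" and u: "u \<in> verts G"
  shows "local_resolving (H u) (dist2 (H u)) {s. (u, s) \<in> S}"
  unfolding local_resolving_def
proof (intro conjI allI impI)
  show "{s. (u, s) \<in> S} \<subseteq> verts (H u)"
    using S by (auto simp: local_resolving_def verts_lex_prod)
next
  fix v w assume vw: "adj (H u) v w"
  then have vwv: "v \<in> verts (H u)" "w \<in> verts (H u)" using adj_fibre u by auto
  have "adj (lex_prod G H) (u, v) (u, w)" using vw vwv u by (simp add: adj_lex_prod)
  then obtain x y where p: "(x, y) \<in> S"
    "dist (lex_prod G H) (x, y) (u, v) \<noteq> dist (lex_prod G H) (x, y) (u, w)"
    using S unfolding local_resolving_def by fast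
  have xy: "x \<in> verts G" "y \<in> verts (H x)"
    using S p(1) by (auto simp: local_resolving_def verts_lex_prod)
  \<comment> \<open>a vertex outside the fibre of \<open>u\<close> sees all of it at the same distance\<close>
  then have "x = u"
    using p(2) dist_lex_prod_other_fibre[of x u y] vwv u by (cases "x = u") auto
  then show "\<exists>s\<in>{s. (u, s) \<in> S}. dist2 (H u) s v \<noteq> dist2 (H u) s w"
    using p xy dist_lex_prod_same_fibre[of u y] vwv u by auto
qed

lemma sum_local_adj_dim_le:
  assumes S: "local_resolving (lex_prod G H) (dist (lex_prod G H)) S"
  shows "(\<Sum>u\<in>verts G. local_adj_dim (H u)) \<le> card S"
proof -
  have S_Sigma: "S = (SIGMA u:verts G. {s. (u, s) \<in> S})"
    using S by (auto simp: local_resolving_def verts_lex_prod)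
  have "(\<Sum>u\<in>verts G. local_adj_dim (H u)) \<le> (\<Sum>u\<in>verts G. card {s. (u, s) \<in> S})"
    using local_adj_dim_le_card local_resolving_fibre[OF S] simple_fibres by (intro sum_mono) blast
  also have "\<dots> = card S"
  proof -
    have "finite {s. (u, s) \<in> S}" if "u \<in> verts G" for u
      using local_resolving_fibre[OF S that] simple_fibres that finite_subset
      by (fastforce simp: local_resolving_def simple_graph_def)
    then show ?thesis using simple by (subst (2) S_Sigma) (simp add: simple_graph_def)
  qed
  finally show ?thesis .
qed

end

subsection \<open>The upper bound over a bipartite graph\<close>

locale bipartite_lex_prod = connected_lex_prod +
  assumes bipartite: "bipartite G"
begin

lemma edge_across_fibres_resolved:
  assumes i: "i \<in> verts G" and Bi: "Bi \<subseteq> verts (H i)"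
    and nondom: "\<forall>v\<in>verts (H i). \<exists>s\<in>Bi. \<not> adj (H i) v s"
    and uu': "adj G u u'" and v: "v \<in> verts (H u)" and w: "w \<in> verts (H u')"
  shows "\<exists>s\<in>Bi. dist (lex_prod G H) (i, s) (u, v) \<noteq> dist (lex_prod G H) (i, s) (u', w)"
proof -
  let ?d = "dist (lex_prod G H)"
  have u: "u \<in> verts G" "u' \<in> verts G" "u \<noteq> u'" using adj_G uu' by auto
  have d1: "dist G u u' = 1" "dist G u' u = 1"
    using dist_adj[of u u' G] dist_adj[of u' u G] adj_G uu' by auto
  have far: "\<exists>s\<in>Bi. ?d (i, s) (i, z) \<noteq> 1" if z: "z \<in> verts (H i)" for z
  proof -
    obtain s where s: "s \<in> Bi" "\<not> adj (H i) z s" using nondom z by blast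
    then have "\<not> adj (H i) s z" "s \<in> verts (H i)" using adj_fibre i Bi by auto
    then show ?thesis
      using s dist_lex_prod_same_fibre[OF i, of s z] dist2_simple_graph[of "H i" s z]
        simple_fibres i z by (intro bexI[of _ s]) auto
  qed
  consider "u = i" | "u' = i" | "i \<noteq> u" "i \<noteq> u'" by blast
  then show ?thesis
  proof cases
    case 1
    with far v obtain s where "s \<in> Bi" "?d (i, s) (i, v) \<noteq> 1" by blast
    then show ?thesis
      using 1 Bi u w d1 dist_lex_prod_other_fibre[of i u' s w] by (intro bexI[of _ s]) auto
  next
    case 2
    with far w obtain s where "s \<in> Bi" "?d (i, s) (i, w) \<noteq> 1" by blast
    then show ?thesis
      using 2 Bi u v d1 dist_lex_prod_other_fibre[of i u s v] by (intro bexI[of _ s]) auto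
  next
    case 3
    obtain s where s: "s \<in> Bi" using nondom fibre_nonempty i by fast
    have "dist G i u \<noteq> dist G i u'"
      using bipartite_dist_adj_neq[OF bipartite uu'] connected i u unfolding connected_def by blast
    then show ?thesis
      using 3 s Bi i u v w dist_lex_prod_other_fibre[of i u s v] dist_lex_prod_other_fibre[of i u' s w]
      by (intro bexI[of _ s]) auto
  qed
qed

lemma local_resolving_Sigma_fibres:
  assumes B: "\<forall>u\<in>verts G. local_resolving (H u) (dist2 (H u)) (B u)"
    and i: "i \<in> verts G" and nondom: "\<forall>v\<in>verts (H i). \<exists>s\<in>B i. \<not> adj (H i) v s"
  shows "local_resolving (lex_prod G H) (dist (lex_prod G H)) (SIGMA u:verts G. B u)"
  unfolding local_resolving_def
proof (intro conjI allI impI)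
  have Bsub: "B u \<subseteq> verts (H u)" if "u \<in> verts G" for u
    using B that by (simp add: local_resolving_def)
  then show "(SIGMA u:verts G. B u) \<subseteq> verts (lex_prod G H)" by (auto simp: verts_lex_prod)
next
  have Bsub: "B u \<subseteq> verts (H u)" if "u \<in> verts G" for u
    using B that by (simp add: local_resolving_def)
  fix p q assume "adj (lex_prod G H) p q"
  then obtain u v u' w where pq: "p = (u, v)" "q = (u', w)"
    and mem: "u \<in> verts G" "v \<in> verts (H u)" "u' \<in> verts G" "w \<in> verts (H u')"
    and cases: "adj G u u' \<or> (u = u' \<and> adj (H u) v w)"
    by (cases p, cases q) (auto simp: adj_lex_prod)
  from cases show "\<exists>s\<in>SIGMA u:verts G. B u. dist (lex_prod G H) s p \<noteq> dist (lex_prod G H) s q"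
  proof (elim disjE conjE)
    assume "adj G u u'"
    with edge_across_fibres_resolved[OF i Bsub[OF i] nondom _ mem(2,4)] i pq show ?thesis by blast
  next
    assume "u = u'" and "adj (H u) v w"
    then obtain s where s: "s \<in> B u" "dist2 (H u) s v \<noteq> dist2 (H u) s w"
      using B mem(1) unfolding local_resolving_def by blast
    then show ?thesis
      using \<open>u = u'\<close> pq mem Bsub[OF mem(1)] dist_lex_prod_same_fibre[of u s]
      by (intro bexI[of _ "(u, s)"]) auto
  qed
qed

lemma local_resolving_of_size_sum:
  assumes "i \<in> verts G" "\<not> classG (H i)"
  shows "\<exists>W. local_resolving (lex_prod G H) (dist (lex_prod G H)) W \<and>
             card W = (\<Sum>u\<in>verts G. local_adj_dim (H u))"
proof -
  obtain Bi where Bi: "local_adj_basis (H i) Bi" "\<forall>v\<in>verts (H i). \<exists>s\<in>Bi. \<not> adj (H i) v s"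
    using assms(2) by (rule not_classG_obtains_basis)
  define B where "B u = (if u = i then Bi else SOME B. local_adj_basis (H u) B)" for u
  have B: "local_adj_basis (H u) (B u)" if "u \<in> verts G" for u
    using Bi local_adj_basis_exists[of "H u"] simple_fibres that
    by (auto simp: B_def intro: someI_ex)
  have "local_resolving (lex_prod G H) (dist (lex_prod G H)) (SIGMA u:verts G. B u)"
    using B Bi(2) assms(1) by (intro local_resolving_Sigma_fibres) (auto simp: local_adj_basis_def B_def)
  moreover have "card (SIGMA u:verts G. B u) = (\<Sum>u\<in>verts G. local_adj_dim (H u))"
  proof -
    have "finite (B u)" if "u \<in> verts G" for u
      using B[OF that] simple_fibres that finite_subset
      by (fastforce simp: local_adj_basis_def local_resolving_def simple_graph_def)
    then show ?thesis
      using B simple by (auto simp: simple_graph_def local_adj_basis_def intro: sum.cong)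
  qed
  ultimately show ?thesis by blast
qed

end

theorem mainTheorem5:
  fixes G :: "'a graph" and H :: "'a \<Rightarrow> 'b graph"
  assumes "simple_graph G" and "connected G" and "bipartite G"
    and "card (verts G) \<ge> 2"
    and "\<forall>u\<in>verts G. simple_graph (H u)"
    and "\<exists>u\<in>verts G. \<not> classG (H u)"
  shows "local_metric_dim (lex_prod G H) = (\<Sum>u\<in>verts G. local_adj_dim (H u))"
proof -
  interpret bipartite_lex_prod G H
    using assms(1-5) by unfold_locales
  obtain W where W: "local_resolving (lex_prod G H) (dist (lex_prod G H)) W"
    "card W = (\<Sum>u\<in>verts G. local_adj_dim (H u))"
    using assms(6) local_resolving_of_size_sum by blast
  show ?thesis
    unfolding local_metric_dim_def
    using W sum_local_adj_dim_le finite_card_local_resolving[OF finite_verts_lex_prod]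
    by (intro Min_eqI) (auto simp flip: W(2))
qed

end
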